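(* Let $D$ be a knot diagram and $B$ an over-bridge or under-bridge of $D$, and let $D^\circ_B$ be the knotoid diagram obtained by removing the interior of $B$ from $D$. Then $g(D)\ge g(D^\circ_B)$.
   Context: A knot diagram is a generic immersion of an oriented circle in $\mathbb{R}^2$ whose only singularities are finitely many transverse double points (crossings), each with over/under information. The genus $g(D)$ of a knot diagram is the genus of the canonical Seifert surface from Seifert's algorithm: smooth each crossing in the orientation-respecting way to get disjoint embedded circles (Seifert circles), fill them with disjoint disks, and attach a half-twisted band at each crossing; equivalently $g(D)=(n-s_D+1)/2$ with $n$ the number of crossings and $s_D$ the number of Seifert circles. An over-bridge (resp. under-bridge) of length $k\ge1$ of $D$ is a sub-arc $B$ of $D$, with endpoints not at crossings, whose interior passes through exactly $k$ crossings, passing over (resp. under) at each. A knotoid diagram is a generic immersion $f:[0,1]\to\mathbb{R}^2$ with only transverse double points, each with over/under data. Its canonical surface: draw it in $\mathbb{R}^2\times\{0\}\subset\mathbb{R}^3$, orient it, smooth every crossing in the orientation-respecting way, obtaining disjoint embedded Seifert circles and one embedded interval $J$ (the Seifert interval) with the same endpoints as the diagram; fill the Seifert circles with disjoint disks lying above $\mathbb{R}^2\times\{0\}$, take a band $J\times[0,1]$ lying below $\mathbb{R}^2\times\{0\}$ meeting it in $J\times\{0\}$, and attach a half-twisted band at each crossing. The genus of a knotoid diagram is the genus of this surface (which has one boundary component). *)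

theory Defs
  imports Main "HOL.Real"
begin

text \<open>
  A knot diagram with n crossings is encoded by its Gauss data:
  the 2n crossing visits met when travelling once around the oriented circle are
  numbered 0, ..., 2n-1 (cyclically, in the order of travel); partner i is the other
  visit of the same crossing; over i says whether the strand passes over at visit i;
  lr i says whether, walking along the strand at visit i, the other strand crosses
  from right to left (this fixes the cyclic order of the four half-edges at the crossing,
  i.e. the rotation system of the underlying 4-valent plane graph).
  Edge e (e < 2n) is the arc of the diagram from visit e to visit (e+1) mod 2n.
\<close>

record gauss_diagram =
  glen    :: nat
  partner :: "nat \<Rightarrow> nat"
  over    :: "nat \<Rightarrow> bool"
  lr      :: "nat \<Rightarrow> bool"

definition num_orbits :: "('a \<Rightarrow> 'a) \<Rightarrow> 'a set \<Rightarrow> nat" where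
  "num_orbits f S = card ((\<lambda>x. {(f ^^ k) x | k. True}) ` S)"

definition pairing :: "nat \<Rightarrow> (nat \<Rightarrow> nat) \<Rightarrow> bool" where
  "pairing N p \<longleftrightarrow> (\<forall>i<N. p i < N \<and> p i \<noteq> i \<and> p (p i) = i)"

text \<open>Half-edges at crossings: Out i = start of edge i at visit i,
  In i = end of edge (i-1) mod N at visit i.  Darts: edges traversed forwards/backwards.\<close>
datatype hedge = Out nat | In nat
datatype dart = Fwd nat | Bwd nat

text \<open>Next half-edge counterclockwise around the crossing.\<close>
fun next_he :: "gauss_diagram \<Rightarrow> hedge \<Rightarrow> hedge" where
  "next_he D (Out i) = (if lr D i then Out (partner D i) else In (partner D i))"
| "next_he D (In i) = (if lr D i then In (partner D i) else Out (partner D i))"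

fun arr_he :: "nat \<Rightarrow> dart \<Rightarrow> hedge" where
  "arr_he N (Fwd e) = In (Suc e mod N)"
| "arr_he N (Bwd e) = Out e"

fun leave_dart :: "nat \<Rightarrow> hedge \<Rightarrow> dart" where
  "leave_dart N (Out k) = Fwd k"
| "leave_dart N (In k) = Bwd ((k + N - 1) mod N)"

text \<open>Face-tracing permutation of the underlying 4-valent map.\<close>
definition face_step :: "gauss_diagram \<Rightarrow> dart \<Rightarrow> dart" where
  "face_step D d = leave_dart (glen D) (next_he D (arr_he (glen D) d))"

definition num_faces :: "gauss_diagram \<Rightarrow> nat" where
  "num_faces D = num_orbits (face_step D)
     ({Fwd e | e. e < glen D} \<union> {Bwd e | e. e < glen D})"

text \<open>Well-formed Gauss data which is realised by a diagram in the plane: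
  the 4-valent map (n vertices, 2n edges, connected) embeds in the sphere,
  i.e. has n + 2 faces (Euler's formula); the crossing-free diagram is a round circle.\<close>
definition knot_diagram :: "gauss_diagram \<Rightarrow> bool" where
  "knot_diagram D \<longleftrightarrow>
     pairing (glen D) (partner D) \<and>
     (\<forall>i < glen D. over D (partner D i) = (\<not> over D i)) \<and>
     (\<forall>i < glen D. lr D (partner D i) = (\<not> lr D i)) \<and>
     (glen D = 0 \<or> num_faces D = glen D div 2 + 2)"

definition crossings :: "gauss_diagram \<Rightarrow> nat" where
  "crossings D = glen D div 2"

text \<open>Seifert circles: after the oriented smoothing, the end of edge e (at visit (e+1) mod N)
  continues into the outgoing edge of the other visit of the same crossing.\<close>
definition seifert_step :: "gauss_diagram \<Rightarrow> nat \<Rightarrow> nat" where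
  "seifert_step D e = partner D (Suc e mod glen D)"

definition seifert_circles :: "gauss_diagram \<Rightarrow> nat" where
  "seifert_circles D =
     (if glen D = 0 then 1 else num_orbits (seifert_step D) {0..<glen D})"

definition knot_genus :: "gauss_diagram \<Rightarrow> real" where
  "knot_genus D = (real (crossings D) - real (seifert_circles D) + 1) / 2"

text \<open>Knotoid diagrams: visits 0..M-1 along the oriented interval, partner, over/under.
  Edge e (0 \<le> e \<le> M) ends at visit e (or at the head if e = M); edge 0 starts at the tail.\<close>
record knotoid_diagram =
  klen     :: nat
  kpartner :: "nat \<Rightarrow> nat"
  kover    :: "nat \<Rightarrow> bool"

text \<open>Oriented smoothing: edge e (e < M) continues into edge kpartner e + 1.
  Closing the Seifert interval up (head edge M followed by tail edge 0) turns it into one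
  extra cycle, so the Seifert circles are all cycles but that one.\<close>
definition kseifert_step :: "knotoid_diagram \<Rightarrow> nat \<Rightarrow> nat" where
  "kseifert_step K e = (if e < klen K then Suc (kpartner K e) else 0)"

definition kseifert_circles :: "knotoid_diagram \<Rightarrow> nat" where
  "kseifert_circles K = num_orbits (kseifert_step K) {0..klen K} - 1"

text \<open>Canonical surface: s disks, one band along the Seifert interval, n half-twisted
  bands; Euler characteristic s + 1 - n, one boundary component, so genus (n - s)/2.\<close>
definition knotoid_genus :: "knotoid_diagram \<Rightarrow> real" where
  "knotoid_genus K = (real (klen K div 2) - real (kseifert_circles K)) / 2"

text \<open>A bridge: the sub-arc starting on edge (a-1) mod N, passing through the k consecutive
  visits a, a+1, ..., a+k-1 (mod N) and ending on edge (a+k-1) mod N.\<close>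
definition bridge_set :: "gauss_diagram \<Rightarrow> nat \<Rightarrow> nat \<Rightarrow> nat set" where
  "bridge_set D a k = {(a + t) mod glen D | t. t < k}"

definition over_bridge :: "gauss_diagram \<Rightarrow> nat \<Rightarrow> nat \<Rightarrow> bool" where
  "over_bridge D a k \<longleftrightarrow> 1 \<le> k \<and> k < glen D \<and> a < glen D \<and>
     (\<forall>t<k. over D ((a + t) mod glen D))"

definition under_bridge :: "gauss_diagram \<Rightarrow> nat \<Rightarrow> nat \<Rightarrow> bool" where
  "under_bridge D a k \<longleftrightarrow> 1 \<le> k \<and> k < glen D \<and> a < glen D \<and>
     (\<forall>t<k. \<not> over D ((a + t) mod glen D))"

text \<open>Removing the interior of the bridge: the remaining arc runs from the end of the bridge
  (tail) to its start (head), through the visits a+k, ..., a-1 (mod N), except that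
  the crossings met by the bridge disappear.\<close>
definition remaining_visits :: "gauss_diagram \<Rightarrow> nat \<Rightarrow> nat \<Rightarrow> nat list" where
  "remaining_visits D a k =
     filter (\<lambda>i. partner D i \<notin> bridge_set D a k)
       (map (\<lambda>t. (a + k + t) mod glen D) [0..<glen D - k])"

definition remove_bridge :: "gauss_diagram \<Rightarrow> nat \<Rightarrow> nat \<Rightarrow> knotoid_diagram" where
  "remove_bridge D a k =
     (let L = remaining_visits D a k in
      \<lparr> klen = length L,
        kpartner = (\<lambda>m. THE m'. m' < length L \<and> L ! m' = partner D (L ! m)),
        kover = (\<lambda>m. over D (L ! m)) \<rparr>)"

end

theory Submission
  imports Defs "HOL-Combinatorics.Transposition"
begin

(*
  Removing the interior of an over- or under-bridge B (meeting k crossings) from a knot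
  diagram D with n crossings leaves a knotoid diagram K with n - k crossings.  Writing s(D)
  for the Seifert circles of D and c(K) for the cycles of the knotoid's smoothing map
  (the Seifert circles of K plus the closed-up Seifert interval), the genus inequality
  g(D) >= g(K) is equivalent to  s(D) <= c(K) + k.

  1. Partial smoothing.  Smooth D at every visit except the 2k visits of the crossings on
     B, where the strand goes straight on.  Undoing the smoothing at one crossing composes
     the Seifert map with a transposition, which changes the number of cycles by at most
     one; hence s(D) is at most the number of cycles of the partial smoothing plus k.
  2. Comparison with the knotoid.  Since B is a bridge, a crossing met by B is met only
     once there, so each edge of K corresponds to the edge of D ending at the same visit
     (the head edge to the edge entering B); every step of the knotoid's smoothing map is
     a finite run of the partial smoothing, and every cycle of the latter contains such an
     edge.  So the partial smoothing has at most c(K) cycles.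
*)

definition orb :: "('a \<Rightarrow> 'a) \<Rightarrow> 'a \<Rightarrow> 'a set" where
  "orb f x = {(f ^^ n) x | n. True}"

lemma num_orbits_eq_card_orb: "num_orbits f S = card (orb f ` S)"
  unfolding num_orbits_def orb_def by simp

lemma funpow_in_orb: "(f ^^ n) x \<in> orb f x"
  unfolding orb_def by blast

lemma self_in_orb: "x \<in> orb f x"
  using funpow_in_orb[of 0] by simp

lemma orb_trans:
  assumes "y \<in> orb f x" and "z \<in> orb f y"
  shows "z \<in> orb f x"
proof -
  obtain m n where "y = (f ^^ m) x" and "z = (f ^^ n) y"
    using assms unfolding orb_def by blast
  then have "z = (f ^^ (n + m)) x" by (simp add: funpow_add)
  then show ?thesis by (simp add: funpow_in_orb)
qed

lemma orb_subset: "y \<in> orb f x \<Longrightarrow> orb f y \<subseteq> orb f x"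
  using orb_trans by (rule subsetI)

(* Pigeonhole: a permutation of a finite set returns every point to itself. *)
lemma funpow_returns:
  assumes "finite S" and "bij_betw f S S" and "x \<in> S"
  obtains n where "n > 0" and "(f ^^ n) x = x"
proof -
  let ?iter = "\<lambda>i. (f ^^ i) x"
  have "?iter ` {0..card S} \<subseteq> S"
    using assms(2,3) bij_betw_funpow[OF assms(2)] by (auto dest: bij_betw_imp_surj_on)
  then have "card (?iter ` {0..card S}) < card {0..card S}"
    using card_mono[OF assms(1)] by (metis card_atLeastAtMost diff_zero le_imp_less_Suc)
  then obtain i j where ij: "i < j" "?iter i = ?iter j"
    using pigeonhole unfolding inj_on_def by (metis linorder_neqE_nat)
  have "(f ^^ i) ((f ^^ (j - i)) x) = (f ^^ i) x"
    using ij by (simp flip: funpow_add comp_apply[of "f ^^ i"])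
  moreover have "(f ^^ (j - i)) x \<in> S"
    using bij_betw_funpow[OF assms(2)] assms(3) by (auto dest: bij_betw_imp_surj_on)
  ultimately have "(f ^^ (j - i)) x = x"
    using bij_betw_funpow[OF assms(2), of i] assms(3) by (auto simp: bij_betw_def inj_on_def)
  with ij(1) show ?thesis by (intro that[of "j - i"]) simp_all
qed

lemma orb_eq:
  assumes "finite S" and "bij_betw f S S" and "x \<in> S" and "y \<in> orb f x"
  shows "orb f y = orb f x"
proof
  show "orb f y \<subseteq> orb f x" using assms(4) by (rule orb_subset)
  obtain n where n: "n > 0" "(f ^^ n) x = x" using funpow_returns[OF assms(1-3)] .
  obtain m where m: "y = (f ^^ m) x" using assms(4) unfolding orb_def by blast
  have "(f ^^ (n * m - m)) y = (f ^^ (n * m)) x"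
    using n(1) by (simp add: m flip: funpow_add comp_apply[of "f ^^ (n * m - m)"])
  also have "\<dots> = x"
    using funpow_mod_eq[where f = f and n = n and x = x and m = "n * m"] n(2) by simp
  finally have "x \<in> orb f y" by (metis funpow_in_orb)
  then show "orb f x \<subseteq> orb f y" by (rule orb_subset)
qed

(* Composing a permutation with a transposition changes its number of cycles by at most one:
   cycles avoiding both transposed points are untouched. *)
lemma num_orbits_le_transpose:
  assumes fin: "finite S" and bij: "bij_betw f S S" and ab: "a \<in> S" "b \<in> S"
  shows "num_orbits f S \<le> num_orbits (transpose a b \<circ> f) S + 1"
proof -
  let ?g = "transpose a b \<circ> f"
  let ?O = "orb f ` S" and ?O' = "orb ?g ` S"
  have untouched: "?O - {orb f a, orb f b} \<subseteq> ?O' - {orb ?g a}"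
  proof
    fix C assume C: "C \<in> ?O - {orb f a, orb f b}"
    then obtain x where x: "x \<in> S" "C = orb f x" by auto
    have avoid: "a \<notin> C" "b \<notin> C"
      using C x orb_eq[OF fin bij x(1)] by auto
    have "(?g ^^ n) x = (f ^^ n) x" for n
    proof (induction n)
      case (Suc n)
      have "f ((f ^^ n) x) \<in> C" using x(2) funpow_in_orb[of "Suc n" f x] by simp
      with Suc avoid show ?case by (auto simp: transpose_def)
    qed simp
    then have "orb ?g x = C" unfolding x(2) orb_def by simp
    with x(1) avoid self_in_orb[of a ?g] show "C \<in> ?O' - {orb ?g a}" by auto
  qed
  have "card ?O \<le> card ((?O - {orb f a, orb f b}) \<union> {orb f a, orb f b})"
    using fin by (intro card_mono) auto
  also have "\<dots> \<le> card (?O - {orb f a, orb f b}) + card {orb f a, orb f b}"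
    by (rule card_Un_le)
  also have "\<dots> \<le> card (?O' - {orb ?g a}) + 2"
    using untouched fin by (intro add_mono card_mono) (auto simp: card_insert_le_m1)
  also have "\<dots> = card ?O' + 1"
    using ab fin card_gt_0_iff[of ?O'] by (simp add: card_Diff_singleton, fastforce)
  finally show ?thesis by (simp add: num_orbits_eq_card_orb)
qed

lemma num_orbits_le_by_orbit_map:
  assumes fin: "finite S" and bij: "bij_betw g S S" and finT: "finite T"
    and into: "h ` T \<subseteq> T" "\<phi> ` T \<subseteq> S"
    and step: "\<And>t. t \<in> T \<Longrightarrow> \<phi> (h t) \<in> orb g (\<phi> t)"
    and hits: "\<And>x. x \<in> S \<Longrightarrow> \<exists>t\<in>T. \<phi> t \<in> orb g x"
  shows "num_orbits g S \<le> num_orbits h T"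
proof -
  have iterate: "\<phi> ((h ^^ n) t) \<in> orb g (\<phi> t)" if "t \<in> T" for t n
  proof (induction n)
    case (Suc n)
    have "(h ^^ n) t \<in> T" using that into(1) by (induction n) auto
    then show ?case using Suc step orb_trans by fastforce
  qed (simp add: self_in_orb)
  let ?r = "\<lambda>C E. \<exists>t\<in>T. E = orb h t \<and> C = orb g (\<phi> t)"
  have "card (orb g ` S) \<le> card (orb h ` T)"
  proof (rule card_le_if_inj_on_rel[where r = ?r])
    show "\<exists>E. E \<in> orb h ` T \<and> ?r C E" if "C \<in> orb g ` S" for C
    proof -
      obtain x where x: "x \<in> S" "C = orb g x" using \<open>C \<in> orb g ` S\<close> by blast
      then obtain t where "t \<in> T" "\<phi> t \<in> orb g x" using hits by blast
      with x orb_eq[OF fin bij] show ?thesis by blast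
    qed
    show "C1 = C2" if r: "?r C1 E" "?r C2 E" for C1 C2 E
    proof -
      obtain t1 t2 where t: "t1 \<in> T" "t2 \<in> T" "orb h t1 = orb h t2"
        and C: "C1 = orb g (\<phi> t1)" "C2 = orb g (\<phi> t2)" using r by metis
      obtain n where "t2 = (h ^^ n) t1"
        using t(3) self_in_orb[of t2 h] unfolding orb_def by auto
      then have "\<phi> t2 \<in> orb g (\<phi> t1)" using iterate t(1) by simp
      with C orb_eq[OF fin bij] into(2) t(1) show ?thesis by blast
    qed
  qed (use finT in simp)
  then show ?thesis by (simp add: num_orbits_eq_card_orb)
qed

lemma mod_add_left_inj:
  fixes x y N :: nat
  assumes "x < N" and "y < N" and "(a + x) mod N = (a + y) mod N"
  shows "x = y"
proof -
  have "x = y" if "x \<le> y" "y < N" "(a + x) mod N = (a + y) mod N" for x y :: nat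
  proof -
    have "N dvd y - x" using that mod_eq_dvd_iff_nat[of "a + x" "a + y" N] by simp
    moreover have "y - x < N" using that(2) by simp
    ultimately have "y - x = 0" by (metis dvd_imp_le not_gr0 not_le)
    then show ?thesis using that(1) by simp
  qed
  from this[of x y] this[of y x] assms show ?thesis by (metis nat_le_linear)
qed

text \<open>The map smooth_except X
  continues along the oriented smoothing at visits outside X, and straight on at visits in X.
  With X empty this is the Seifert map.\<close>

locale visit_pairing =
  fixes N :: nat and p :: "nat \<Rightarrow> nat"
  assumes pairing: "pairing N p" and N_pos: "0 < N"
begin

lemma partner_lt: "i < N \<Longrightarrow> p i < N"
  and partner_neq: "i < N \<Longrightarrow> p i \<noteq> i"
  and partner_partner [simp]: "i < N \<Longrightarrow> p (p i) = i"
  using pairing unfolding pairing_def by blast+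

definition end_visit :: "nat \<Rightarrow> nat" where
  "end_visit e = Suc e mod N"

lemma end_visit_lt: "end_visit e < N"
  unfolding end_visit_def using N_pos by simp

lemma inj_on_end_visit: "inj_on end_visit {0..<N}"
proof (rule inj_onI)
  fix e e' assume "e \<in> {0..<N}" "e' \<in> {0..<N}" "end_visit e = end_visit e'"
  then show "e = e'"
    using mod_add_left_inj[of e N e' 1] by (simp add: end_visit_def)
qed

definition resolve :: "nat set \<Rightarrow> nat \<Rightarrow> nat" where
  "resolve X v = (if v \<in> X then v else p v)"

definition smooth_except :: "nat set \<Rightarrow> nat \<Rightarrow> nat" where
  "smooth_except X e = resolve X (end_visit e)"

lemma resolve_involution:
  assumes closed: "\<And>x. x \<in> X \<Longrightarrow> p x \<in> X" and v: "v < N"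
  shows "resolve X (resolve X v) = v"
  using closed[of "p v"] v unfolding resolve_def by auto

lemma bij_smooth_except:
  assumes closed: "\<And>x. x \<in> X \<Longrightarrow> p x \<in> X"
  shows "bij_betw (smooth_except X) {0..<N} {0..<N}"
proof -
  have into: "smooth_except X ` {0..<N} \<subseteq> {0..<N}"
    using end_visit_lt partner_lt by (auto simp: smooth_except_def resolve_def)
  have "inj_on (resolve X) {0..<N}"
    by (rule inj_onI) (metis resolve_involution[OF closed] atLeastLessThan_iff)
  moreover have "end_visit ` {0..<N} \<subseteq> {0..<N}" using end_visit_lt by auto
  ultimately have "inj_on (smooth_except X) {0..<N}"
    using inj_on_end_visit comp_inj_on[of end_visit "{0..<N}" "resolve X"] inj_on_subset
    unfolding smooth_except_def comp_def by blast
  with into show ?thesis by (simp add: bij_betw_def endo_inj_surj)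
qed

lemma smooth_except_remove_pair:
  assumes closed: "\<And>x. x \<in> X \<Longrightarrow> p x \<in> X" and u: "u \<in> X" "u < N"
  shows "smooth_except X = transpose u (p u) \<circ> smooth_except (X - {u, p u})"
proof
  fix e
  let ?v = "end_visit e"
  have v: "?v < N" by (rule end_visit_lt)
  have pu: "p u \<in> X" "p u \<noteq> u" using closed[OF u(1)] partner_neq[OF u(2)] .
  consider "?v \<in> X - {u, p u}" | "?v = u" | "?v = p u" | "?v \<notin> X" using u by blast
  then show "smooth_except X e = (transpose u (p u) \<circ> smooth_except (X - {u, p u})) e"
  proof cases
    case 4
    then have "?v \<noteq> u" "?v \<noteq> p u" using u pu by auto
    then have "p ?v \<noteq> u" "p ?v \<noteq> p u"
      using partner_partner[OF v] partner_partner[OF u(2)] by metis+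
    with 4 show ?thesis by (simp add: smooth_except_def resolve_def)
  qed (use u pu in \<open>auto simp: smooth_except_def resolve_def\<close>)
qed

lemma num_orbits_smooth_except:
  assumes "X \<subseteq> {0..<N}" and "\<And>x. x \<in> X \<Longrightarrow> p x \<in> X"
  shows "num_orbits (smooth_except {}) {0..<N}
           \<le> num_orbits (smooth_except X) {0..<N} + card X div 2"
  using assms
proof (induction "card X" arbitrary: X rule: less_induct)
  case less
  show ?case
  proof (cases "X = {}")
    case False
    then obtain u where u: "u \<in> X" by blast
    let ?X' = "X - {u, p u}"
    have u_lt: "u < N" using u less.prems(1) by auto
    have pair_in: "{u, p u} \<subseteq> X" using u less.prems(2) by blast
    have fin: "finite X" using less.prems(1) finite_subset by blast
    have card_X': "card ?X' + 2 = card X"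
      using card_Diff_subset[OF _ pair_in] card_mono[OF fin pair_in] partner_neq[OF u_lt] fin
      by simp
    have closed': "p x \<in> ?X'" if "x \<in> ?X'" for x
    proof -
      have x: "x \<in> X" "x \<noteq> u" "x \<noteq> p u" "x < N" using that less.prems(1) by auto
      then have "p x \<noteq> u" "p x \<noteq> p u"
        using partner_partner[OF x(4)] partner_partner[OF u_lt] by metis+
      with x(1) less.prems(2) show ?thesis by blast
    qed
    have "num_orbits (smooth_except {}) {0..<N}
            \<le> num_orbits (smooth_except ?X') {0..<N} + card ?X' div 2"
      using less.hyps[of ?X'] card_X' less.prems(1) closed' by fastforce
    also have "num_orbits (smooth_except ?X') {0..<N}
                 \<le> num_orbits (transpose u (p u) \<circ> smooth_except ?X') {0..<N} + 1"
      using num_orbits_le_transpose[OF _ bij_smooth_except[OF closed']] u_lt partner_lt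
      by simp
    also have "transpose u (p u) \<circ> smooth_except ?X' = smooth_except X"
      using smooth_except_remove_pair[OF less.prems(2) u u_lt] by simp
    finally show ?thesis using card_X' by simp
  qed simp
qed

end

text \<open>Visits are renumbered starting
  right after the bridge: after t is the t-th visit after it, so the bridge itself occupies
  positions N-k, ..., N-1.  The kept positions are those whose visit survives in the knotoid,
  lost_visits are the 2k visits of the crossings met by the bridge.\<close>

locale bridge = visit_pairing "glen D" "partner D" for D :: gauss_diagram +
  fixes a k :: nat
  assumes k_pos: "1 \<le> k" and k_lt: "k < glen D"
    and bridge_visits_unpaired:
      "\<And>b. b \<in> bridge_set D a k \<Longrightarrow> partner D b \<notin> bridge_set D a k"
begin

abbreviation "N \<equiv> glen D"
abbreviation "p \<equiv> partner D"
abbreviation "B \<equiv> bridge_set D a k"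

definition lost_visits :: "nat set" where
  "lost_visits = B \<union> p ` B"

definition after :: "nat \<Rightarrow> nat" where
  "after t = (a + k + t) mod N"

definition kept :: "nat list" where
  "kept = filter (\<lambda>t. p (after t) \<notin> B) [0..<N - k]"

abbreviation "L \<equiv> remaining_visits D a k"
abbreviation "M \<equiv> length L"

lemma remaining_visits_eq: "L = map after kept"
  unfolding remaining_visits_def kept_def after_def filter_map by (simp add: comp_def)

lemma after_lt: "after t < N"
  unfolding after_def using N_pos by simp

lemma after_add_N [simp]: "after (t + N) = after t"
  unfolding after_def by (simp add: add.assoc[symmetric])

lemma end_visit_after: "end_visit (after s) = after (Suc s)"
  unfolding after_def end_visit_def by (simp add: mod_Suc_eq)

lemma bij_after: "bij_betw after {0..<N} {0..<N}"
proof -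
  have "inj_on after {0..<N}"
  proof (rule inj_onI)
    fix t t' assume "t \<in> {0..<N}" "t' \<in> {0..<N}" "after t = after t'"
    then show "t = t'" using mod_add_left_inj[of t N t' "a + k"] by (simp add: after_def)
  qed
  moreover have "after ` {0..<N} \<subseteq> {0..<N}" using after_lt by auto
  ultimately show ?thesis by (simp add: bij_betw_def endo_inj_surj)
qed

lemma bridge_set_eq: "B = (\<lambda>t. (a + t) mod N) ` {..<k}"
  unfolding bridge_set_def by auto

lemma card_bridge_set: "card B = k"
proof -
  have "inj_on (\<lambda>t. (a + t) mod N) {..<k}"
  proof (rule inj_onI)
    fix t t' assume "t \<in> {..<k}" "t' \<in> {..<k}" "(a + t) mod N = (a + t') mod N"
    then show "t = t'" using mod_add_left_inj[of t N t' a] k_lt by simp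
  qed
  then show ?thesis unfolding bridge_set_eq by (simp add: card_image)
qed

lemma bridge_set_subset: "B \<subseteq> {0..<N}"
  unfolding bridge_set_eq using N_pos by auto

lemma after_in_bridge_set:
  assumes t: "t < N"
  shows "after t \<in> B \<longleftrightarrow> N - k \<le> t"
proof
  assume "after t \<in> B"
  then obtain t' where t': "t' < k" "(a + (k + t)) mod N = (a + t') mod N"
    unfolding bridge_set_eq after_def by (auto simp: add.assoc)
  show "N - k \<le> t"
  proof (rule ccontr)
    assume "\<not> N - k \<le> t"
    then have "k + t < N" by simp
    then have "k + t = t'" using mod_add_left_inj[OF _ _ t'(2)] t'(1) k_lt by simp
    then show False using t'(1) by simp
  qed
next
  assume late: "N - k \<le> t"
  have wrap: "a + k + t = (a + (t - (N - k))) + N" using late t k_lt by simp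
  have "after t = (a + (t - (N - k))) mod N"
    unfolding after_def wrap by (simp only: mod_add_self2)
  moreover have "t - (N - k) < k" using t late k_lt by linarith
  ultimately show "after t \<in> B" unfolding bridge_set_eq by blast
qed


lemma partner_image_bridge_subset: "p ` B \<subseteq> {0..<N}"
  using bridge_set_subset partner_lt by auto

lemma lost_visits_subset: "lost_visits \<subseteq> {0..<N}"
  unfolding lost_visits_def using bridge_set_subset partner_image_bridge_subset by blast

lemma lost_visits_closed: "x \<in> lost_visits \<Longrightarrow> p x \<in> lost_visits"
  unfolding lost_visits_def using bridge_set_subset by auto

(* A bridge meets each of its crossings once, so k crossings give 2k lost visits. *)
lemma card_lost_visits: "card lost_visits = 2 * k"
proof -
  have "inj_on p B"
  proof (rule inj_onI)
    fix x y assume "x \<in> B" "y \<in> B" "p x = p y"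
    then have "p (p x) = p (p y)" "x < N" "y < N" using bridge_set_subset by auto
    then show "x = y" by simp
  qed
  then have "card (p ` B) = k" using card_bridge_set by (simp add: card_image)
  moreover have "B \<inter> p ` B = {}" using bridge_visits_unpaired by blast
  moreover have "finite B" "finite (p ` B)"
    using bridge_set_subset partner_image_bridge_subset finite_subset by blast+
  ultimately show ?thesis
    unfolding lost_visits_def using card_bridge_set by (simp add: card_Un_disjoint)
qed

lemma set_kept: "set kept = {t. t < N - k \<and> p (after t) \<notin> B}"
  unfolding kept_def by auto

lemma kept_lt: "t \<in> set kept \<Longrightarrow> t < N - k"
  unfolding set_kept by simp

lemma sorted_kept: "sorted_wrt (<) kept"
  unfolding kept_def by (rule sorted_wrt_filter) simp

lemma after_lost_iff_not_kept:
  assumes t: "t < N - k"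
  shows "after t \<in> lost_visits \<longleftrightarrow> t \<notin> set kept"
proof -
  have "after t \<notin> B" using after_in_bridge_set[of t] t by simp
  moreover have "after t \<in> p ` B \<longleftrightarrow> p (after t) \<in> B"
  proof
    assume "after t \<in> p ` B"
    then obtain b where "b \<in> B" "after t = p b" by blast
    then show "p (after t) \<in> B" using bridge_set_subset by auto
  next
    assume "p (after t) \<in> B"
    moreover have "after t = p (p (after t))" using after_lt by simp
    ultimately show "after t \<in> p ` B" by blast
  qed
  ultimately show ?thesis unfolding lost_visits_def set_kept using t by auto
qed

lemma after_lost_if_not_kept:
  assumes "t < N" and "t \<notin> set kept"
  shows "after t \<in> lost_visits"
proof (cases "t < N - k")
  case True then show ?thesis using after_lost_iff_not_kept assms(2) by blast
next
  case False then show ?thesis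
    using after_in_bridge_set[OF assms(1)] unfolding lost_visits_def by simp
qed

lemma set_remaining_visits: "set L = {0..<N} - lost_visits"
proof
  show "set L \<subseteq> {0..<N} - lost_visits"
  proof
    fix x assume "x \<in> set L"
    then obtain t where "t \<in> set kept" "x = after t" unfolding remaining_visits_eq by auto
    then show "x \<in> {0..<N} - lost_visits"
      using after_lost_iff_not_kept[of t] set_kept after_lt by auto
  qed
  show "{0..<N} - lost_visits \<subseteq> set L"
  proof
    fix x assume x: "x \<in> {0..<N} - lost_visits"
    then have "x \<in> after ` {0..<N}" using bij_betw_imp_surj_on[OF bij_after] by simp
    then obtain t where t: "t < N" "x = after t" by auto
    then have "t \<in> set kept" using after_lost_if_not_kept x by blast
    then show "x \<in> set L" unfolding remaining_visits_eq using t(2) by simp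
  qed
qed

lemma distinct_remaining_visits: "distinct L"
proof -
  have "set kept \<subseteq> {0..<N}" using kept_lt by fastforce
  then have "inj_on after (set kept)"
    by (rule inj_on_subset[OF bij_betw_imp_inj_on[OF bij_after]])
  moreover have "distinct kept" unfolding kept_def by (rule distinct_filter) simp
  ultimately show ?thesis unfolding remaining_visits_eq by (simp add: distinct_map)
qed

lemma length_remaining_visits: "M = N - 2 * k" and twice_k_le: "2 * k \<le> N"
proof -
  have "M = card ({0..<N} - lost_visits)"
    using distinct_card[OF distinct_remaining_visits] set_remaining_visits by simp
  then show "M = N - 2 * k"
    using lost_visits_subset card_lost_visits by (simp add: card_Diff_subset finite_subset)
  show "2 * k \<le> N"
    using card_mono[OF _ lost_visits_subset] card_lost_visits by simp
qed


abbreviation "K \<equiv> remove_bridge D a k"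

lemma klen_remove_bridge: "klen K = M"
  unfolding remove_bridge_def Let_def by simp

lemma kpartner_remove_bridge:
  assumes e: "e < M"
  shows "kpartner K e < M \<and> L ! kpartner K e = p (L ! e)"
proof -
  have "L ! e \<in> {0..<N} - lost_visits" using e set_remaining_visits nth_mem by blast
  then have "p (L ! e) \<in> {0..<N} - lost_visits"
    using partner_lt lost_visits_closed[of "p (L ! e)"] by auto
  then obtain m where "m < M" "L ! m = p (L ! e)"
    using set_remaining_visits by (metis in_set_conv_nth)
  moreover have "m' = m" if "m' < M" "L ! m' = p (L ! e)" for m'
    using that \<open>L ! m = p (L ! e)\<close>
      nth_eq_iff_index_eq[OF distinct_remaining_visits that(1) \<open>m < M\<close>] by simp
  ultimately have "\<exists>!m. m < M \<and> L ! m = p (L ! e)" by blast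
  then show ?thesis unfolding remove_bridge_def Let_def by (simp, rule theI')
qed

lemma kseifert_step_remove_bridge:
  "kseifert_step K e = (if e < M then Suc (kpartner K e) else 0)"
  unfolding kseifert_step_def klen_remove_bridge ..

lemma length_kept: "length kept = M"
  unfolding remaining_visits_eq by simp

lemma remaining_visits_nth: "j < M \<Longrightarrow> L ! j = after (kept ! j)"
  unfolding remaining_visits_eq by simp

(* The position of the visit at which knotoid edge j ends, the head edge ending at the start
   of the bridge (position N - k); these positions increase strictly with j. *)
definition kept_bound :: "nat \<Rightarrow> nat" where
  "kept_bound j = (if j < M then kept ! j else N - k)"

lemma kept_nth_lt: "j < M \<Longrightarrow> kept ! j < N - k"
  using kept_lt[OF nth_mem[of j kept]] length_kept by simp

lemma kept_bound_le: "kept_bound j \<le> N - k"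
  using kept_nth_lt[of j] by (simp add: kept_bound_def less_imp_le)

lemma kept_bound_less:
  assumes "i < j" and "j \<le> M"
  shows "kept_bound i < kept_bound j"
proof (cases "j < M")
  case True then show ?thesis
    using assms sorted_wrt_nth_less[OF sorted_kept, of i j] length_kept
    by (simp add: kept_bound_def)
next
  case False then show ?thesis
    using assms kept_nth_lt[of i] by (simp add: kept_bound_def)
qed

lemma kept_bound_less_iff:
  assumes "i \<le> M" and "j \<le> M"
  shows "kept_bound i < kept_bound j \<longleftrightarrow> i < j"
proof
  assume less: "kept_bound i < kept_bound j"
  show "i < j"
  proof (rule ccontr)
    assume "\<not> i < j"
    then have "j = i \<or> j < i" by auto
    then show False using less kept_bound_less[of j i] assms(1) by auto
  qed
qed (use kept_bound_less assms in blast)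

lemma kept_eq_kept_bound: "t \<in> set kept \<Longrightarrow> \<exists>j<M. t = kept_bound j"
  by (metis in_set_conv_nth kept_bound_def length_kept)

lemma lost_between_kept:
  assumes "j < M" and "kept_bound j < s" and "s < kept_bound (Suc j)"
  shows "after s \<in> lost_visits"
proof (rule after_lost_if_not_kept)
  show "s < N" using assms(3) kept_bound_le[of "Suc j"] k_pos by linarith
  show "s \<notin> set kept"
  proof
    assume "s \<in> set kept"
    then obtain i where "i < M" "s = kept_bound i" using kept_eq_kept_bound by blast
    then show False
      using assms kept_bound_less_iff[of j i] kept_bound_less_iff[of i "Suc j"] by simp
  qed
qed

lemma lost_before_kept:
  assumes "s < kept_bound 0"
  shows "after s \<in> lost_visits"
proof (rule after_lost_if_not_kept)
  show "s < N" using assms kept_bound_le[of 0] k_pos by linarith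
  show "s \<notin> set kept"
  proof
    assume "s \<in> set kept"
    then obtain i where "i < M" "s = kept_bound i" using kept_eq_kept_bound by blast
    then show False using assms kept_bound_less_iff[of i 0] by simp
  qed
qed


(* Knotoid edge j corresponds to the knot edge ending at the same position. *)
definition knot_edge :: "nat \<Rightarrow> nat" where
  "knot_edge j = after (kept_bound j + N - 1)"

abbreviation "g \<equiv> smooth_except lost_visits"

lemma knot_edge_lt: "knot_edge j < N"
  unfolding knot_edge_def by (rule after_lt)

lemma after_pred: "0 < s \<Longrightarrow> after (s + N - 1) = after (s - 1)"
  using after_add_N[of "s - 1"] by simp

lemma straight_run:
  assumes "\<And>i. i < d \<Longrightarrow> after (s + i + 1) \<in> lost_visits"
  shows "(g ^^ d) (after s) = after (s + d)"
  using assms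
proof (induction d)
  case (Suc d)
  have "after (Suc (s + d)) \<in> lost_visits" using Suc.prems[of d] by simp
  then show ?case
    using Suc by (simp add: smooth_except_def resolve_def end_visit_after)
qed simp

lemma end_visit_knot_edge: "j < M \<Longrightarrow> end_visit (knot_edge j) = L ! j"
  using N_pos after_add_N[of "kept ! j"]
  by (simp add: knot_edge_def kept_bound_def end_visit_after remaining_visits_nth)

lemma smooth_knot_edge:
  assumes j: "j < M"
  shows "g (knot_edge j) = after (kept ! kpartner K j)"
proof -
  note end_eq = end_visit_knot_edge[OF j]
  have "L ! j \<notin> lost_visits" using j set_remaining_visits nth_mem by blast
  then have "g (knot_edge j) = p (L ! j)" by (simp add: smooth_except_def resolve_def end_eq)
  also have "\<dots> = after (kept ! kpartner K j)"
    using kpartner_remove_bridge[OF j] remaining_visits_nth by metis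
  finally show ?thesis .
qed

lemma run_to_next_edge:
  assumes m: "m < M"
  shows "knot_edge (Suc m) \<in> orb g (after (kept ! m))"
proof -
  have gap: "kept_bound m < kept_bound (Suc m)" using m kept_bound_less by simp
  define d where "d = kept_bound (Suc m) - 1 - kept ! m"
  have "after (kept ! m + i + 1) \<in> lost_visits" if "i < d" for i
    using lost_between_kept[OF m] that gap m unfolding d_def kept_bound_def by simp
  then have "(g ^^ d) (after (kept ! m)) = after (kept ! m + d)" by (rule straight_run)
  also have "kept ! m + d = kept_bound (Suc m) - 1"
    using gap m unfolding d_def kept_bound_def by simp
  also have "after \<dots> = knot_edge (Suc m)"
    using after_pred gap unfolding knot_edge_def by simp
  finally show ?thesis by (metis funpow_in_orb)
qed

(* From the edge entering the bridge, the partial smoothing runs through the bridge and on to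
   the end of the tail edge: the closed-up Seifert interval. *)
lemma run_through_bridge: "knot_edge 0 \<in> orb g (knot_edge M)"
proof -
  have M_edge: "knot_edge M = after (N - k - 1)"
    using after_add_N[of "N - k - 1"] k_lt unfolding knot_edge_def kept_bound_def
    by (simp add: algebra_simps)
  define d where "d = k + kept_bound 0"
  have "after (N - k - 1 + i + 1) \<in> lost_visits" if "i < d" for i
  proof -
    have idx: "N - k - 1 + i + 1 = N - k + i" using k_lt by simp
    show ?thesis
    proof (cases "i < k")
      case True
      then have "after (N - k + i) \<in> B" using after_in_bridge_set[of "N - k + i"] k_lt by simp
      then show ?thesis unfolding idx lost_visits_def by simp
    next
      case False
      then have "after (N - k + i) = after (i - k)"
        using after_add_N[of "i - k"] k_lt by (simp add: algebra_simps)
      moreover have "i - k < kept_bound 0" using False that unfolding d_def by simp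
      ultimately show ?thesis unfolding idx using lost_before_kept by simp
    qed
  qed
  then have "(g ^^ d) (knot_edge M) = after (N - k - 1 + d)"
    unfolding M_edge by (rule straight_run)
  also have "N - k - 1 + d = kept_bound 0 + N - 1" using k_lt unfolding d_def by simp
  finally show ?thesis unfolding knot_edge_def by (metis funpow_in_orb)
qed

lemma knotoid_step_in_orbit:
  assumes "t \<le> M"
  shows "knot_edge (kseifert_step K t) \<in> orb g (knot_edge t)"
proof (cases "t < M")
  case True
  have "knot_edge (kseifert_step K t) \<in> orb g (g (knot_edge t))"
    using run_to_next_edge kpartner_remove_bridge[OF True] smooth_knot_edge[OF True]
    by (simp add: kseifert_step_remove_bridge True)
  moreover have "g (knot_edge t) \<in> orb g (knot_edge t)" using funpow_in_orb[of 1] by simp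
  ultimately show ?thesis using orb_trans by fast
next
  case False
  then show ?thesis using assms run_through_bridge by (simp add: kseifert_step_remove_bridge)
qed


(* Every cycle of the partial smoothing passes through the end of a knotoid edge; if it meets
   no kept visit it runs around the whole diagram. *)
lemma orbit_meets_knot_edge:
  assumes x: "x < N"
  shows "\<exists>t\<in>{0..M}. knot_edge t \<in> orb g x"
proof (cases "\<exists>n. end_visit ((g ^^ n) x) \<notin> lost_visits")
  case True
  then obtain n where n: "end_visit ((g ^^ n) x) \<notin> lost_visits" by blast
  have y_lt: "(g ^^ n) x < N"
    using bij_betw_apply[OF bij_betw_funpow[OF bij_smooth_except[OF lost_visits_closed]]] x
    by simp
  have "end_visit ((g ^^ n) x) \<in> set L"
    using n end_visit_lt set_remaining_visits by auto
  then obtain j where j: "j < M" "L ! j = end_visit ((g ^^ n) x)"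
    by (metis in_set_conv_nth)
  then have "knot_edge j = (g ^^ n) x"
    using end_visit_knot_edge[OF j(1)] inj_on_end_visit knot_edge_lt[of j] y_lt
    by (simp add: inj_on_def)
  moreover have "j \<in> {0..M}" using j(1) by simp
  ultimately show ?thesis using funpow_in_orb[of n g x] by metis
next
  case False
  then have straight: "end_visit ((g ^^ n) x) \<in> lost_visits" for n by blast
  have iterate: "(g ^^ n) x = (x + n) mod N" for n
  proof (induction n)
    case (Suc n)
    have "(g ^^ Suc n) x = end_visit ((g ^^ n) x)"
      using straight[of n] by (simp add: smooth_except_def resolve_def)
    then show ?case by (simp add: Suc end_visit_def mod_Suc_eq)
  qed (use x in simp)
  have "(g ^^ (knot_edge M + N - x)) x = knot_edge M"
    using iterate x knot_edge_lt[of M] by simp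
  then show ?thesis by (metis atLeastAtMost_iff funpow_in_orb order_refl zero_le)
qed

lemma num_orbits_smoothed_le:
  "num_orbits g {0..<N} \<le> num_orbits (kseifert_step K) {0..M}"
proof (rule num_orbits_le_by_orbit_map[where \<phi> = knot_edge])
  show "bij_betw g {0..<N} {0..<N}" by (rule bij_smooth_except[OF lost_visits_closed])
  show "kseifert_step K ` {0..M} \<subseteq> {0..M}"
    using kpartner_remove_bridge by (auto simp: kseifert_step_remove_bridge Suc_leI)
  show "knot_edge ` {0..M} \<subseteq> {0..<N}" using knot_edge_lt by auto
qed (use knotoid_step_in_orbit orbit_meets_knot_edge in auto)

lemma seifert_circles_le: "seifert_circles D \<le> num_orbits (kseifert_step K) {0..M} + k"
proof -
  have "smooth_except {} = seifert_step D"
    by (auto simp: smooth_except_def resolve_def end_visit_def seifert_step_def)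
  then have "seifert_circles D \<le> num_orbits g {0..<N} + card lost_visits div 2"
    using num_orbits_smooth_except[OF lost_visits_subset lost_visits_closed] N_pos
    by (simp add: seifert_circles_def)
  then show ?thesis using num_orbits_smoothed_le card_lost_visits by simp
qed

lemma knotoid_genus_le: "knotoid_genus K \<le> knot_genus D"
proof -
  define c where "c = num_orbits (kseifert_step K) {0..M}"
  have c_pos: "1 \<le> c"
    unfolding c_def num_orbits_eq_card_orb by (simp add: Suc_leI card_gt_0_iff)
  have half_length: "M div 2 = N div 2 - k"
    using length_remaining_visits twice_k_le by simp
  have "knotoid_genus K = (real (N div 2 - k) - real (c - 1)) / 2"
    by (simp add: knotoid_genus_def kseifert_circles_def klen_remove_bridge c_def half_length)
  also have "\<dots> = (real (N div 2) - real k - real c + 1) / 2"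
    using twice_k_le c_pos by (simp add: of_nat_diff)
  also have "\<dots> \<le> (real (N div 2) - real (seifert_circles D) + 1) / 2"
    using seifert_circles_le unfolding c_def by simp
  also have "\<dots> = knot_genus D"
    unfolding knot_genus_def crossings_def ..
  finally show ?thesis .
qed

end

(* Each crossing has one over- and one under-visit, so a bridge never meets a crossing twice. *)
lemma bridge_meets_crossings_once:
  assumes "knot_diagram D" and "over_bridge D a k \<or> under_bridge D a k"
    and "b \<in> bridge_set D a k"
  shows "partner D b \<notin> bridge_set D a k"
proof
  assume pb: "partner D b \<in> bridge_set D a k"
  have b_lt: "b < glen D"
    using assms(2,3) unfolding bridge_set_def over_bridge_def under_bridge_def by auto
  have "over D (partner D b) = (\<not> over D b)"
    using assms(1) b_lt unfolding knot_diagram_def by blast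
  moreover have "over D b = over D (partner D b)"
    using assms(2,3) pb unfolding bridge_set_def over_bridge_def under_bridge_def by auto
  ultimately show False by simp
qed

theorem mainTheorem4:
  assumes "knot_diagram D"
    and "over_bridge D a k \<or> under_bridge D a k"
  shows "knot_genus D \<ge> knotoid_genus (remove_bridge D a k)"
proof -
  have "pairing (glen D) (partner D)" using assms(1) unfolding knot_diagram_def by blast
  moreover have "1 \<le> k" "k < glen D"
    using assms(2) unfolding over_bridge_def under_bridge_def by blast+
  ultimately interpret bridge D a k
    using bridge_meets_crossings_once[OF assms] by unfold_locales auto
  show ?thesis by (rule knotoid_genus_le)
qed

end
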